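(* Consider an $n$-th order strictly proper SISO system with transfer function \[ P(s)=\frac{y(s)}{u(s)}=\frac{b_1s^{n-1}+\dots+b_{n-1}s+b_n}{s^n+a_1s^{n-1}+\dots+a_{n-1}s+a_n}, \] with unknown coefficients $a_i\in[\underline a_i,\bar a_i]$ and $b_j\in[\underline b_j,\bar b_j]$ for $i,j=1,\dots,n$. Let $c_0=[1,0,\dots,0]$ and let $A_0\in\mathbb{R}^{n\times n}$ be a strictly stable matrix in observable canonical form with characteristic polynomial $s^n+\hat a_1s^{n-1}+\dots+\hat a_n$ (ones on the superdiagonal, first column $-[\hat a_1,\dots,\hat a_n]^T$, zeros elsewhere). Realize the system as $\dot x=A_0x+b_yy+b_uu$, $y=c_0x$, with $b_y=[\hat a_1-a_1,\dots,\hat a_n-a_n]^T$ and $b_u=[b_1,\dots,b_n]^T$. Let $\theta_y,\theta_u$ satisfy $\dot\theta_y=A_0^T\theta_y+c_0^Ty$, $\dot\theta_u=A_0^T\theta_u+c_0^Tu$; let $C_0$ be the observability matrix of $(c_0,A_0)$ (rows $c_0A_0^{k}$, $k=0,\dots,n-1$), $\Theta_y,\Theta_u$ the controllability matrices $[\theta,A_0^T\theta,\dots,(A_0^T)^{n-1}\theta]$ for $\theta=\theta_y,\theta_u$, and $E_y=C_0^{-1}\Theta_y^T$, $E_u=C_0^{-1}\Theta_u^T$. For parameter vectors define $\hat x(b_y,b_u)=E_yb_y+E_ub_u$, and let $\hat x(b_{yi},b_{ui})$, $i=1,\dots,N$, be all the vertices of the convex hull of the points $E_y[\hat a_1-a_1,\dots,\hat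 a_n-a_n]^T+E_u[b_1,\dots,b_n]^T$ with $a_i\in\{\underline a_i,\bar a_i\}$, $b_j\in\{\underline b_j,\bar b_j\}$. Let $\epsilon_0=x(0)-\hat x(0)$, where $\hat x$ is evaluated at the true coefficients. Let $Q\succ0$ and $\|x\|_q=(x^TQ^{-1}x)^{1/2}$. If \[ A_0Q+QA_0^T+2\alpha Q\preceq 0, \] then for every $t\ge0$ there exists $i\in\{1,\dots,N\}$ such that \[ \|x(t)\|_q\le\|\hat x(b_{yi},b_{ui})(t)\|_q+e^{-\alpha t}\|\epsilon_0\|_q . \]
   Context: $\hat x(b_{yi},b_{ui})(t)$ denotes $E_y(t)b_{yi}+E_u(t)b_{ui}$, computable from the measured $u,y$ through the filters. *)

theory Defs
  imports "HOL-Analysis.Analysis" "HOL-Computational_Algebra.Polynomial"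
begin

text \<open>Coordinates of real^('n::{finite,linorder}) are ordered by the linear order on 'n; pos i is the
  0-based position of coordinate i, so coordinate i corresponds to index pos i + 1
  of the paper.\<close>
definition pos :: "'n::{finite,linorder} \<Rightarrow> nat" where
  "pos i = card {j. j < i}"

definition mpow :: "real^('n::{finite,linorder})^('n::{finite,linorder}) \<Rightarrow> nat \<Rightarrow> real^('n::{finite,linorder})^('n::{finite,linorder})" where
  "mpow A k = (((**) A) ^^ k) (mat 1)"

definition obs_canon :: "real^('n::{finite,linorder}) \<Rightarrow> real^('n::{finite,linorder})^('n::{finite,linorder})" where
  "obs_canon ahat = (\<chi> i j. (if pos j = pos i + 1 then 1 else 0)
                             - (if pos j = 0 then ahat $ i else 0))"

definition canon_charpoly :: "real^('n::{finite,linorder}) \<Rightarrow> real poly" where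
  "canon_charpoly ahat = monom 1 CARD('n) + (\<Sum>i\<in>UNIV. monom (ahat $ i) (CARD('n) - 1 - pos i))"

definition strictly_stable_canon :: "real^('n::{finite,linorder}) \<Rightarrow> bool" where
  "strictly_stable_canon ahat \<longleftrightarrow>
     (\<forall>z::complex. poly (map_poly of_real (canon_charpoly ahat)) z = 0 \<longrightarrow> Re z < 0)"

definition c0 :: "real^('n::{finite,linorder})" where
  "c0 = (\<chi> i. if pos i = 0 then 1 else 0)"

definition obsv_mat :: "real^('n::{finite,linorder}) \<Rightarrow> real^('n::{finite,linorder})^('n::{finite,linorder}) \<Rightarrow> real^('n::{finite,linorder})^('n::{finite,linorder})" where
  "obsv_mat c A = (\<chi> i. c v* mpow A (pos i))"

definition ctrb_mat :: "real^('n::{finite,linorder})^('n::{finite,linorder}) \<Rightarrow> real^('n::{finite,linorder}) \<Rightarrow> real^('n::{finite,linorder})^('n::{finite,linorder})" where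
  "ctrb_mat A th = (\<chi> r c. (mpow A (pos c) *v th) $ r)"

definition qnorm :: "real^('n::{finite,linorder})^('n::{finite,linorder}) \<Rightarrow> real^('n::{finite,linorder}) \<Rightarrow> real" where
  "qnorm Q v = sqrt (v \<bullet> (matrix_inv Q *v v))"

definition pos_def_mat :: "real^('n::{finite,linorder})^('n::{finite,linorder}) \<Rightarrow> bool" where
  "pos_def_mat Q \<longleftrightarrow> transpose Q = Q \<and> (\<forall>v. v \<noteq> 0 \<longrightarrow> 0 < v \<bullet> (Q *v v))"

definition neg_semidef_mat :: "real^('n::{finite,linorder})^('n::{finite,linorder}) \<Rightarrow> bool" where
  "neg_semidef_mat M \<longleftrightarrow> transpose M = M \<and> (\<forall>v. v \<bullet> (M *v v) \<le> 0)"

end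

(* The filter estimate xhat(b_y, b_u)(t) = E_y(t) b_y + E_u(t) b_u equals K(b_y) theta_y(t) +
   K(b_u) theta_u(t) for the constant matrices K(v) = C0^-1 [v, A0 v, ..., A0^(n-1) v]^T.  Each K(v)
   maps c0^T to v and intertwines A0^T with A0, so at the true parameters xhat obeys the same
   equation as x and the error eps = x - xhat solves eps' = A0 eps.  The Lyapunov inequality makes
   eps^T Q^-1 eps decay like exp(-2 alpha t).  Since xhat(t) is affine in the parameters, its value
   at the true parameters lies in the convex hull of its values at the corners of the parameter
   box, and the convex function ||.||_q attains its maximum over that polytope at a vertex; the
   triangle inequality for ||.||_q concludes. *)

theory Submission
  imports Defs
begin

section \<open>Matrix powers\<close>

lemma mpow_0 [simp]: "mpow A 0 = mat 1"
  by (simp add: mpow_def)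

lemma mpow_Suc: "mpow A (Suc k) = A ** mpow A k"
  by (simp add: mpow_def)

lemma mpow_add: "mpow A (m + k) = mpow A m ** mpow A k"
  by (induction m) (simp_all add: mpow_Suc matrix_mul_assoc)

lemma mpow_Suc_right: "mpow A (Suc k) = mpow A k ** A"
  using mpow_add[of A k 1] by (simp add: mpow_Suc)

lemma mpow_commute: "A ** mpow A k = mpow A k ** A"
  by (metis mpow_Suc mpow_Suc_right)

lemma mpow_transpose: "mpow (transpose A) k = transpose (mpow A k)"
proof (induction k)
  case (Suc k)
  have "mpow (transpose A) (Suc k) = transpose A ** transpose (mpow A k)"
    by (simp add: mpow_Suc Suc.IH)
  then show ?case
    by (simp add: mpow_Suc_right matrix_transpose_mul)
qed simp

lemma matrix_inv_right: "invertible A \<Longrightarrow> A ** matrix_inv A = mat 1"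
  and matrix_inv_left: "invertible A \<Longrightarrow> matrix_inv A ** A = mat 1"
  unfolding invertible_def matrix_inv_def by (metis (mono_tags, lifting) someI_ex)+

section \<open>Observability of the observable canonical form\<close>

lemma pos_strict_mono: "i < j \<Longrightarrow> pos i < pos (j::'n::{finite,linorder})"
  unfolding pos_def by (rule psubset_card_mono) auto

lemma pos_eq_iff [simp]: "pos i = pos j \<longleftrightarrow> i = (j::'n::{finite,linorder})"
  by (cases i j rule: linorder_cases) (auto dest: pos_strict_mono)

lemma pos_less_card: "pos (i::'n::{finite,linorder}) < CARD('n)"
  unfolding pos_def by (rule psubset_card_mono) auto

lemma range_pos: "range (pos :: 'n::{finite,linorder} \<Rightarrow> nat) = {..<CARD('n)}"
proof -
  have "inj (pos :: 'n \<Rightarrow> nat)"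
    by (simp add: inj_def)
  then have "card (range (pos :: 'n \<Rightarrow> nat)) = CARD('n)"
    by (simp add: card_image)
  moreover have "range (pos :: 'n \<Rightarrow> nat) \<subseteq> {..<CARD('n)}"
    using pos_less_card by auto
  ultimately show ?thesis
    by (simp add: card_subset_eq)
qed

lemma obs_canon_shift:
  assumes "pos j = pos i + 1"
  shows "(v v* obs_canon ah) $ j = v $ i"
proof -
  have "(v v* obs_canon ah) $ j = (\<Sum>l\<in>UNIV. v $ l * ((if pos j = pos l + 1 then 1 else 0)
                                      - (if pos j = 0 then ah $ l else 0)))"
    by (simp add: vector_matrix_mult_def obs_canon_def)
  also have "\<dots> = (\<Sum>l\<in>UNIV. if l = i then v $ i else 0)"
    using assms by (intro sum.cong) auto
  finally show ?thesis
    by simp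
qed

lemma c0_mpow_obs_canon:
  fixes j :: "'n::{finite,linorder}"
  shows "k \<le> pos j \<Longrightarrow> (c0 v* mpow (obs_canon ah) k) $ j = (if pos j = k then 1 else 0)"
proof (induction k arbitrary: j)
  case 0
  then show ?case
    by (simp add: c0_def)
next
  case (Suc k)
  have "pos j - 1 \<in> range (pos :: 'n \<Rightarrow> nat)"
    using pos_less_card[of j] by (simp add: range_pos)
  then obtain i :: 'n where i: "pos i = pos j - 1"
    by (metis rangeE)
  have "(c0 v* mpow (obs_canon ah) (Suc k)) $ j = (c0 v* mpow (obs_canon ah) k) $ i"
    using Suc.prems i by (simp add: mpow_Suc_right vector_matrix_mul_assoc[symmetric] obs_canon_shift)
  then show ?case
    using Suc i by auto
qed

lemma obsv_mat_obs_canon_unitriangular: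
  "pos k \<le> pos j \<Longrightarrow> obsv_mat c0 (obs_canon ah) $ k $ j = (if j = k then 1 else 0)"
  by (simp add: obsv_mat_def c0_mpow_obs_canon)

lemma invertible_obsv_mat_obs_canon:
  fixes ah :: "real^'n::{finite,linorder}"
  shows "invertible (obsv_mat c0 (obs_canon ah))"
proof -
  let ?C = "obsv_mat c0 (obs_canon ah)"
  have "v = 0" if v: "?C *v v = 0" for v
  proof -
    have "\<forall>k::'n. pos k = m \<longrightarrow> v $ k = 0" for m
    proof (induction m rule: less_induct)
      case (less m)
      show ?case
      proof (intro allI impI)
        fix k :: 'n assume k: "pos k = m"
        have "?C $ k $ j * v $ j = (if j = k then v $ k else 0)" for j
          using less.IH obsv_mat_obs_canon_unitriangular[of k j ah] k by (cases "pos j < m") auto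
        then have "(?C *v v) $ k = v $ k"
          by (simp add: matrix_vector_mult_def)
        then show "v $ k = 0"
          using v by simp
      qed
    qed
    then show ?thesis
      by (simp add: vec_eq_iff)
  qed
  then show ?thesis
    using matrix_left_invertible_ker invertible_left_inverse by blast
qed

section \<open>The filter gain\<close>

lemma obsv_mat_mult_vec: "(obsv_mat c A *v v) $ k = c \<bullet> (mpow A (pos k) *v v)"
proof -
  have "(obsv_mat c A *v v) $ k = (c v* mpow A (pos k)) \<bullet> v"
    by (simp add: obsv_mat_def matrix_vector_mult_def inner_vec_def)
  then show ?thesis
    by (simp add: dot_lmul_matrix)
qed

lemma transpose_ctrb_mat_mult_vec: "(transpose (ctrb_mat A v) *v w) $ k = (mpow A (pos k) *v v) \<bullet> w"
  by (simp add: ctrb_mat_def transpose_def matrix_vector_mult_def inner_vec_def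
      del: transpose_matrix_vector)

lemma transpose_ctrb_mat_swap:
  "transpose (ctrb_mat (transpose A) w) *v v = transpose (ctrb_mat A v) *v w"
  by (simp add: vec_eq_iff transpose_ctrb_mat_mult_vec mpow_transpose dot_lmul_matrix[symmetric]
      inner_commute del: transpose_matrix_vector)

lemma matrix_mult_ctrb_mat: "A ** ctrb_mat A v = ctrb_mat A (A *v v)"
proof -
  have "(A ** ctrb_mat A v) $ r $ k = (A *v (mpow A (pos k) *v v)) $ r" for r k
    by (simp add: matrix_matrix_mult_def matrix_vector_mult_def ctrb_mat_def)
  then show ?thesis
    by (simp add: vec_eq_iff ctrb_mat_def matrix_vector_mul_assoc mpow_commute)
qed

lemma obsv_mat_mult_ctrb_mat:
  "(obsv_mat c A ** ctrb_mat A v) $ j $ k = c \<bullet> (mpow A (pos j + pos k) *v v)"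
proof -
  have "(obsv_mat c A ** ctrb_mat A v) $ j $ k = (obsv_mat c A *v (mpow A (pos k) *v v)) $ j"
    by (simp add: matrix_matrix_mult_def matrix_vector_mult_def ctrb_mat_def)
  also have "\<dots> = c \<bullet> (mpow A (pos j) *v (mpow A (pos k) *v v))"
    by (rule obsv_mat_mult_vec)
  finally show ?thesis
    by (simp add: matrix_vector_mul_assoc mpow_add)
qed

lemma transpose_obsv_mat_mult_ctrb_mat:
  "transpose (obsv_mat c A ** ctrb_mat A v) = obsv_mat c A ** ctrb_mat A v"
  by (simp add: vec_eq_iff transpose_def obsv_mat_mult_ctrb_mat add.commute)

(* Follows from the symmetry of the Hankel matrix obsv_mat c A ** ctrb_mat A v and the injectivity
   of obsv_mat c A, with no appeal to Cayley-Hamilton. *)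
lemma ctrb_mat_shift:
  assumes inv: "invertible (obsv_mat c A)"
  defines "G \<equiv> obsv_mat c A ** A ** matrix_inv (obsv_mat c A)"
  shows "A ** ctrb_mat A v = ctrb_mat A v ** transpose G"
proof -
  define C where "C = obsv_mat c A"
  define V where "V = ctrb_mat A v"
  have "C ** (V ** transpose G) = transpose (G ** transpose (C ** V))"
    by (simp add: matrix_transpose_mul matrix_mul_assoc)
  also have "\<dots> = transpose (C ** A ** (matrix_inv C ** C) ** V)"
    by (simp add: transpose_obsv_mat_mult_ctrb_mat C_def V_def G_def matrix_mul_assoc)
  also have "\<dots> = transpose (C ** ctrb_mat A (A *v v))"
    using inv by (simp add: C_def V_def matrix_inv_left matrix_mult_ctrb_mat flip: matrix_mul_assoc)
  also have "\<dots> = C ** (A ** V)"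
    by (simp add: transpose_obsv_mat_mult_ctrb_mat C_def V_def matrix_mult_ctrb_mat)
  finally have "matrix_inv C ** (C ** (V ** transpose G)) = matrix_inv C ** (C ** (A ** V))"
    by simp
  then show ?thesis
    using inv by (simp add: C_def V_def matrix_mul_assoc matrix_inv_left)
qed

(* E_y(t) b = filter_gain c0 A0 b *v theta_y(t): the paper's estimate as a matrix that does not
   depend on the filter state. *)
definition filter_gain ::
    "real^('n::{finite,linorder}) \<Rightarrow> real^('n::{finite,linorder})^('n::{finite,linorder})
      \<Rightarrow> real^('n::{finite,linorder}) \<Rightarrow> real^('n::{finite,linorder})^('n::{finite,linorder})" where
  "filter_gain c A v = matrix_inv (obsv_mat c A) ** transpose (ctrb_mat A v)"

lemma filter_gain_intertwines:
  assumes inv: "invertible (obsv_mat c A)"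
  shows "filter_gain c A v ** transpose A = A ** filter_gain c A v"
proof -
  define C where "C = obsv_mat c A"
  have "filter_gain c A v ** transpose A = matrix_inv C ** transpose (A ** ctrb_mat A v)"
    by (simp add: filter_gain_def C_def matrix_transpose_mul matrix_mul_assoc)
  also have "\<dots> = matrix_inv C ** C ** A ** (matrix_inv C ** transpose (ctrb_mat A v))"
    using ctrb_mat_shift[OF inv] by (simp add: C_def matrix_transpose_mul matrix_mul_assoc)
  also have "\<dots> = A ** filter_gain c A v"
    using inv by (simp add: C_def filter_gain_def matrix_inv_left)
  finally show ?thesis .
qed

lemma filter_gain_mult_output_vec:
  assumes inv: "invertible (obsv_mat c A)"
  shows "filter_gain c A v *v c = v"
proof -
  have "transpose (ctrb_mat A v) *v c = obsv_mat c A *v v"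
    by (simp add: vec_eq_iff transpose_ctrb_mat_mult_vec obsv_mat_mult_vec inner_commute
        del: transpose_matrix_vector)
  then have "filter_gain c A v *v c = (matrix_inv (obsv_mat c A) ** obsv_mat c A) *v v"
    by (simp add: filter_gain_def flip: matrix_vector_mul_assoc del: transpose_matrix_vector)
  then show ?thesis
    using inv by (simp add: matrix_inv_left)
qed

lemma ctrb_estimate_eq_filter_gain:
  "(matrix_inv (obsv_mat c A) ** transpose (ctrb_mat (transpose A) w)) *v v = filter_gain c A v *v w"
  by (simp add: filter_gain_def transpose_ctrb_mat_swap flip: matrix_vector_mul_assoc
      del: transpose_matrix_vector)

lemma filter_gain_has_vector_derivative:
  assumes inv: "invertible (obsv_mat c A)"
    and filter: "(\<theta> has_vector_derivative (transpose A *v \<theta> t + r *\<^sub>R c)) F"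
  shows "((\<lambda>s. filter_gain c A v *v \<theta> s)
           has_vector_derivative (A *v (filter_gain c A v *v \<theta> t) + r *\<^sub>R v)) F"
proof -
  have "((\<lambda>s. filter_gain c A v *v \<theta> s) has_vector_derivative
          filter_gain c A v *v (transpose A *v \<theta> t + r *\<^sub>R c)) F"
    using filter by (rule bounded_linear.has_vector_derivative[OF matrix_vector_mul_bounded_linear])
  then show ?thesis
    using filter_gain_intertwines[OF inv] filter_gain_mult_output_vec[OF inv]
    by (simp add: matrix_vector_right_distrib matrix_vector_mult_scaleR matrix_vector_mul_assoc
        del: transpose_matrix_vector)
qed

lemma state_minus_filter_estimate_has_vector_derivative:
  assumes inv: "invertible (obsv_mat c A)"
    and x: "(x has_vector_derivative (A *v x t + y *\<^sub>R v + u *\<^sub>R w)) F"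
    and th_y: "(\<theta>\<^sub>y has_vector_derivative (transpose A *v \<theta>\<^sub>y t + y *\<^sub>R c)) F"
    and th_u: "(\<theta>\<^sub>u has_vector_derivative (transpose A *v \<theta>\<^sub>u t + u *\<^sub>R c)) F"
  defines "e \<equiv> \<lambda>s. x s - (filter_gain c A v *v \<theta>\<^sub>y s + filter_gain c A w *v \<theta>\<^sub>u s)"
  shows "(e has_vector_derivative A *v e t) F"
proof -
  have "(e has_vector_derivative (A *v x t + y *\<^sub>R v + u *\<^sub>R w)
          - ((A *v (filter_gain c A v *v \<theta>\<^sub>y t) + y *\<^sub>R v)
             + (A *v (filter_gain c A w *v \<theta>\<^sub>u t) + u *\<^sub>R w))) F"
    unfolding e_def
    by (intro has_vector_derivative_diff has_vector_derivative_add x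
        filter_gain_has_vector_derivative[OF inv th_y] filter_gain_has_vector_derivative[OF inv th_u])
  then show ?thesis
    by (simp add: e_def matrix_vector_mult_diff_distrib matrix_vector_right_distrib algebra_simps)
qed

section \<open>Positive definite quadratic forms\<close>

lemma pos_def_mat_invertible:
  assumes "pos_def_mat Q"
  shows "invertible Q"
proof -
  have "Q *v v = 0 \<longrightarrow> v = 0" for v
    using assms unfolding pos_def_mat_def by (metis inner_zero_right less_irrefl)
  then show ?thesis
    using matrix_left_invertible_ker invertible_left_inverse by blast
qed

lemma pos_def_mat_matrix_inv:
  fixes Q :: "real^('n::{finite,linorder})^('n::{finite,linorder})"
  assumes Q: "pos_def_mat Q"
  shows "pos_def_mat (matrix_inv Q)"
  unfolding pos_def_mat_def
proof (intro conjI allI impI)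
  have QP: "Q ** matrix_inv Q = mat 1" and PQ: "matrix_inv Q ** Q = mat 1"
    using pos_def_mat_invertible[OF Q] by (simp_all add: matrix_inv_right matrix_inv_left)
  have QT: "transpose Q = Q"
    using Q by (simp add: pos_def_mat_def)
  have "transpose (matrix_inv Q) = transpose (matrix_inv Q) ** (Q ** matrix_inv Q)"
    by (simp add: QP)
  also have "\<dots> = transpose (Q ** matrix_inv Q) ** matrix_inv Q"
    by (simp add: matrix_transpose_mul QT matrix_mul_assoc)
  finally show "transpose (matrix_inv Q) = matrix_inv Q"
    by (simp add: QP)
  fix v :: "real^('n::{finite,linorder})" assume "v \<noteq> 0"
  define w where "w = matrix_inv Q *v v"
  have v: "v = Q *v w"
    by (simp add: w_def matrix_vector_mul_assoc QP)
  then have "w \<noteq> 0"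
    using \<open>v \<noteq> 0\<close> by auto
  then have "0 < w \<bullet> (Q *v w)"
    using Q by (simp add: pos_def_mat_def)
  also have "w \<bullet> (Q *v w) = v \<bullet> (matrix_inv Q *v v)"
    unfolding w_def[symmetric] by (simp add: v inner_commute)
  finally show "0 < v \<bullet> (matrix_inv Q *v v)" .
qed

lemma symmetric_form_commute:
  fixes P :: "real^'n^'n"
  assumes "transpose P = P"
  shows "u \<bullet> (P *v v) = v \<bullet> (P *v u)"
proof -
  have "u \<bullet> (P *v v) = v \<bullet> (u v* P)"
    using dot_lmul_matrix[of u P v] by (simp add: inner_commute)
  then show ?thesis
    using assms by (metis transpose_matrix_vector)
qed

lemma pos_def_mat_nonneg: "pos_def_mat P \<Longrightarrow> 0 \<le> v \<bullet> (P *v v)"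
  by (cases "v = 0") (auto simp: pos_def_mat_def less_imp_le)

lemma pos_def_mat_cauchy_schwarz:
  assumes P: "pos_def_mat P"
  shows "(u \<bullet> (P *v v))\<^sup>2 \<le> (u \<bullet> (P *v u)) * (v \<bullet> (P *v v))"
proof (cases "u = 0")
  case False
  define a where "a = u \<bullet> (P *v u)"
  define b where "b = u \<bullet> (P *v v)"
  define c where "c = v \<bullet> (P *v v)"
  have "0 < a"
    using P False by (simp add: pos_def_mat_def a_def)
  have "v \<bullet> (P *v u) = b"
    using P symmetric_form_commute[of P v u] by (simp add: pos_def_mat_def b_def)
  then have "(v - t *\<^sub>R u) \<bullet> (P *v (v - t *\<^sub>R u)) = c - 2 * t * b + t\<^sup>2 * a" for t
    by (simp add: matrix_vector_mult_diff_distrib matrix_vector_mult_scaleR inner_diff_left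
        inner_diff_right a_def b_def c_def power2_eq_square algebra_simps)
  then have "0 \<le> c - 2 * (b / a) * b + (b / a)\<^sup>2 * a"
    using pos_def_mat_nonneg[OF P] by metis
  also have "\<dots> = c - b\<^sup>2 / a"
    using \<open>0 < a\<close> by (simp add: power2_eq_square field_simps)
  finally show ?thesis
    using \<open>0 < a\<close> by (simp add: a_def b_def c_def field_simps)
qed simp

lemma qnorm_triangle:
  assumes Q: "pos_def_mat Q"
  shows "qnorm Q (u + v) \<le> qnorm Q u + qnorm Q v"
proof -
  define P where "P = matrix_inv Q"
  have P: "pos_def_mat P"
    unfolding P_def using Q by (rule pos_def_mat_matrix_inv)
  define a where "a = u \<bullet> (P *v u)"
  define b where "b = u \<bullet> (P *v v)"
  define c where "c = v \<bullet> (P *v v)"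
  have "0 \<le> a" "0 \<le> c"
    using pos_def_mat_nonneg[OF P] by (simp_all add: a_def c_def)
  have "b \<le> sqrt a * sqrt c"
    using real_le_rsqrt[OF pos_def_mat_cauchy_schwarz[OF P, of u v]]
    by (simp add: a_def b_def c_def real_sqrt_mult)
  have "(u + v) \<bullet> (P *v (u + v)) = a + 2 * b + c"
    using symmetric_form_commute[of P v u] P
    by (simp add: pos_def_mat_def matrix_vector_right_distrib inner_add_left inner_add_right
        a_def b_def c_def)
  also have "\<dots> \<le> (sqrt a + sqrt c)\<^sup>2"
    using \<open>b \<le> sqrt a * sqrt c\<close> \<open>0 \<le> a\<close> \<open>0 \<le> c\<close>
    by (simp add: power2_eq_square algebra_simps)
  finally show ?thesis
    using \<open>0 \<le> a\<close> \<open>0 \<le> c\<close>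
    by (simp add: qnorm_def P_def[symmetric] a_def c_def real_sqrt_le_iff real_le_lsqrt)
qed

lemma qnorm_scaleR: "qnorm Q (r *\<^sub>R v) = \<bar>r\<bar> * qnorm Q v"
proof -
  have "(r *\<^sub>R v) \<bullet> (matrix_inv Q *v (r *\<^sub>R v)) = (r * r) * (v \<bullet> (matrix_inv Q *v v))"
    by (simp add: matrix_vector_mult_scaleR)
  then show ?thesis
    unfolding qnorm_def by (simp only: real_sqrt_mult real_sqrt_mult_self)
qed

lemma convex_on_qnorm:
  assumes "pos_def_mat Q"
  shows "convex_on UNIV (qnorm Q)"
  unfolding convex_on_def
proof (intro conjI ballI allI impI convex_UNIV)
  fix u v and s t :: real assume "0 \<le> s" "0 \<le> t"
  then show "qnorm Q (s *\<^sub>R u + t *\<^sub>R v) \<le> s * qnorm Q u + t * qnorm Q v"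
    using qnorm_triangle[OF assms, of "s *\<^sub>R u" "t *\<^sub>R v"] by (simp add: qnorm_scaleR)
qed

section \<open>Lyapunov decay\<close>

lemma lyapunov_form_derivative_bound:
  assumes Q: "pos_def_mat Q"
    and lyap: "neg_semidef_mat (A ** Q + Q ** transpose A + (2 * \<alpha>) *\<^sub>R Q)"
  shows "(A *v e) \<bullet> (matrix_inv Q *v e) \<le> - \<alpha> * (e \<bullet> (matrix_inv Q *v e))"
proof -
  define v where "v = matrix_inv Q *v e"
  have Qv: "Q *v v = e"
    using pos_def_mat_invertible[OF Q] by (simp add: v_def matrix_vector_mul_assoc matrix_inv_right)
  have "v \<bullet> (Q *v (transpose A *v v)) = v \<bullet> (A *v e)"
    using symmetric_form_commute[of Q v "transpose A *v v"] Q
    by (simp add: pos_def_mat_def Qv dot_lmul_matrix)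
  then have "v \<bullet> ((A ** Q + Q ** transpose A + (2 * \<alpha>) *\<^sub>R Q) *v v)
               = 2 * (v \<bullet> (A *v e)) + 2 * \<alpha> * (v \<bullet> e)"
    by (simp add: matrix_vector_mult_add_rdistrib inner_add_right Qv
        flip: matrix_vector_mul_assoc scaleR_matrix_vector_assoc del: transpose_matrix_vector)
  moreover have "v \<bullet> ((A ** Q + Q ** transpose A + (2 * \<alpha>) *\<^sub>R Q) *v v) \<le> 0"
    using lyap by (simp add: neg_semidef_mat_def)
  ultimately show ?thesis
    by (simp add: v_def inner_commute)
qed

lemma exp_decay_of_derivative_bound:
  fixes V V' :: "real \<Rightarrow> real"
  assumes V: "\<And>s. 0 \<le> s \<Longrightarrow> (V has_real_derivative V' s) (at s within {0..})"
    and bound: "\<And>s. 0 \<le> s \<Longrightarrow> V' s \<le> - c * V s"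
    and t: "0 \<le> t"
  shows "V t \<le> exp (- c * t) * V 0"
proof -
  define W where "W s = exp (c * s) * V s" for s
  have W: "(W has_real_derivative exp (c * s) * (V' s + c * V s)) (at s within {0..})"
    if "0 \<le> s" for s
    unfolding W_def using V[OF that]
    by (auto intro!: derivative_eq_intros simp: algebra_simps)
  have "W t \<le> W 0"
  proof (rule DERIV_nonpos_imp_decreasing_open[OF t])
    fix s assume s: "0 < s" "s < t"
    then have "(W has_real_derivative exp (c * s) * (V' s + c * V s)) (at s within {0<..})"
      by (intro DERIV_subset[OF W]) auto
    then have "(W has_real_derivative exp (c * s) * (V' s + c * V s)) (at s)"
      using s at_within_open[of s "{0<..}"] by simp
    moreover have "exp (c * s) * (V' s + c * V s) \<le> 0"
      using bound[of s] s by (simp add: mult_nonneg_nonpos)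
    ultimately show "\<exists>y. (W has_real_derivative y) (at s) \<and> y \<le> 0"
      by blast
  next
    show "continuous_on {0..t} W"
      unfolding continuous_on_eq_continuous_within
    proof
      fix s assume "s \<in> {0..t}"
      then have "continuous (at s within {0..}) W"
        using DERIV_continuous[OF W] by simp
      then show "continuous (at s within {0..t}) W"
        by (rule continuous_within_subset) auto
    qed
  qed
  then have "exp (- c * t) * (exp (c * t) * V t) \<le> exp (- c * t) * V 0"
    by (simp add: W_def)
  then show ?thesis
    by (simp add: mult.assoc[symmetric] flip: exp_add)
qed

lemma qnorm_exp_decay:
  assumes Q: "pos_def_mat Q"
    and lyap: "neg_semidef_mat (A ** Q + Q ** transpose A + (2 * \<alpha>) *\<^sub>R Q)"
    and e: "\<And>s. 0 \<le> s \<Longrightarrow> (e has_vector_derivative (A *v e s)) (at s within {0..})"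
    and t: "0 \<le> t"
  shows "qnorm Q (e t) \<le> exp (- \<alpha> * t) * qnorm Q (e 0)"
proof -
  define P where "P = matrix_inv Q"
  have P: "transpose P = P"
    using pos_def_mat_matrix_inv[OF Q] by (simp add: P_def pos_def_mat_def)
  have "((\<lambda>s. e s \<bullet> (P *v e s)) has_real_derivative 2 * ((A *v e s) \<bullet> (P *v e s)))
          (at s within {0..})" if "0 \<le> s" for s
  proof -
    have "((\<lambda>s. e s \<bullet> (P *v e s)) has_vector_derivative
            e s \<bullet> (P *v (A *v e s)) + (A *v e s) \<bullet> (P *v e s)) (at s within {0..})"
      using e[OF that] by (intro bounded_bilinear.has_vector_derivative[OF bounded_bilinear_inner]
          bounded_linear.has_vector_derivative[OF matrix_vector_mul_bounded_linear])
    then show ?thesis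
      using symmetric_form_commute[OF P, of "e s" "A *v e s"]
      by (simp add: has_real_derivative_iff_has_vector_derivative)
  qed
  moreover have "2 * ((A *v e s) \<bullet> (P *v e s)) \<le> - (2 * \<alpha>) * (e s \<bullet> (P *v e s))" for s
    using lyapunov_form_derivative_bound[OF Q lyap, of "e s"] by (simp add: P_def)
  ultimately have "e t \<bullet> (P *v e t) \<le> exp (- (2 * \<alpha>) * t) * (e 0 \<bullet> (P *v e 0))"
    by (rule exp_decay_of_derivative_bound[OF _ _ t])
  moreover have "exp (- (2 * \<alpha>) * t) = exp (- \<alpha> * t) ^ 2"
    by (simp add: power2_eq_square flip: exp_add)
  ultimately have "qnorm Q (e t) \<le> sqrt (exp (- \<alpha> * t) ^ 2 * (e 0 \<bullet> (P *v e 0)))"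
    by (simp add: qnorm_def P_def)
  then show ?thesis
    by (simp add: real_sqrt_mult qnorm_def P_def)
qed

section \<open>Convex hulls of parameter boxes\<close>

lemma mem_convex_hull_box_vertices:
  fixes x a b :: "'a::euclidean_space"
  assumes x: "x \<in> cbox a b"
  shows "x \<in> convex hull {v. \<forall>i\<in>Basis. v \<bullet> i = a \<bullet> i \<or> v \<bullet> i = b \<bullet> i}"
proof -
  define L where "L y = (\<Sum>k\<in>Basis. ((b \<bullet> k - a \<bullet> k) * (y \<bullet> k)) *\<^sub>R k)" for y :: 'a
  have "linear L"
    unfolding L_def by (rule linear_compose_sum) (auto simp: algebra_simps linearI)
  have L_coord: "L y \<bullet> i = (b \<bullet> i - a \<bullet> i) * (y \<bullet> i)" if "i \<in> Basis" for y i
    using that by (simp add: L_def inner_sum_left inner_Basis if_distrib cong: if_cong)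
  have affine: "(\<lambda>y. a + L y) ` S = (\<lambda>z. a + z) ` (L ` S)" for S
    by (simp add: image_image)
  have "cbox a b \<noteq> {}"
    using x by blast
  then have "x \<in> (\<lambda>y. a + L y) ` cbox 0 One"
    using cbox_image_unit_interval[OF \<open>cbox a b \<noteq> {}\<close>] x by (simp add: L_def image_image)
  also have "\<dots> = convex hull ((\<lambda>y. a + L y) ` {y. \<forall>i\<in>Basis. y \<bullet> i = 0 \<or> y \<bullet> i = 1})"
    by (simp only: affine unit_interval_convex_hull convex_hull_linear_image[OF \<open>linear L\<close>]
        convex_hull_translation)
  also have "\<dots> \<subseteq> convex hull {v. \<forall>i\<in>Basis. v \<bullet> i = a \<bullet> i \<or> v \<bullet> i = b \<bullet> i}"
    by (rule hull_mono) (auto simp: inner_add_left L_coord)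
  finally show ?thesis .
qed

lemma mem_convex_hull_box_corners_cart:
  fixes x lo hi :: "real^'n"
  assumes "\<forall>i. lo $ i \<le> x $ i \<and> x $ i \<le> hi $ i"
  shows "x \<in> convex hull {v. \<forall>i. v $ i = lo $ i \<or> v $ i = hi $ i}"
  using mem_convex_hull_box_vertices[of x lo hi] assms
  by (simp add: mem_box_cart Basis_vec_def cart_eq_inner_axis)

lemma box_corners_cart_eq_Times:
  "{(p, q). \<forall>i. (p $ i = alo $ i \<or> p $ i = ahi $ i) \<and> (q $ i = blo $ i \<or> q $ i = bhi $ i)}
     = {p. \<forall>i. p $ i = alo $ i \<or> p $ i = ahi $ i} \<times> {q. \<forall>i. q $ i = blo $ i \<or> q $ i = bhi $ i}"
  by auto

lemma finite_box_corners_cart: "finite {v :: real^'n. \<forall>i. v $ i = lo $ i \<or> v $ i = hi $ i}"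
proof (rule finite_subset)
  show "{v. \<forall>i. v $ i = lo $ i \<or> v $ i = hi $ i} \<subseteq> vec_lambda ` (PiE UNIV (\<lambda>i. {lo $ i, hi $ i}))"
  proof
    fix v :: "real^'n" assume "v \<in> {v. \<forall>i. v $ i = lo $ i \<or> v $ i = hi $ i}"
    then have "vec_nth v \<in> PiE UNIV (\<lambda>i. {lo $ i, hi $ i})"
      by auto
    then show "v \<in> vec_lambda ` (PiE UNIV (\<lambda>i. {lo $ i, hi $ i}))"
      by (rule rev_image_eqI) (simp add: vec_lambda_eta)
  qed
qed (intro finite_imageI finite_PiE; simp)

lemma box_point_mem_convex_hull_corners:
  fixes a alo ahi b blo bhi :: "real^'n"
  assumes "\<forall>i. alo $ i \<le> a $ i \<and> a $ i \<le> ahi $ i" "\<forall>i. blo $ i \<le> b $ i \<and> b $ i \<le> bhi $ i"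
  shows "(a, b) \<in> convex hull
           {(p, q). \<forall>i. (p $ i = alo $ i \<or> p $ i = ahi $ i) \<and> (q $ i = blo $ i \<or> q $ i = bhi $ i)}"
  using assms by (simp add: box_corners_cart_eq_Times convex_hull_Times mem_convex_hull_box_corners_cart)

lemma finite_box_corners:
  "finite {(p :: real^'n, q :: real^'n).
     \<forall>i. (p $ i = alo $ i \<or> p $ i = ahi $ i) \<and> (q $ i = blo $ i \<or> q $ i = bhi $ i)}"
  by (simp add: box_corners_cart_eq_Times finite_box_corners_cart)

lemma affine_box_point_mem_convex_hull_corners:
  fixes a alo ahi b blo bhi :: "real^'n"
  assumes "\<forall>i. alo $ i \<le> a $ i \<and> a $ i \<le> ahi $ i" "\<forall>i. blo $ i \<le> b $ i \<and> b $ i \<le> bhi $ i"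
  defines "S \<equiv> {(p, q). \<forall>i. (p $ i = alo $ i \<or> p $ i = ahi $ i) \<and> (q $ i = blo $ i \<or> q $ i = bhi $ i)}"
  shows "M *v (c - a) + N *v b \<in> convex hull ((\<lambda>(p, q). M *v (c - p) + N *v q) ` S)"
proof -
  define L where "L w = N *v snd w - M *v fst w" for w :: "(real^'n) \<times> (real^'n)"
  have "linear L"
    unfolding L_def
    by (rule linearI) (auto simp: matrix_vector_right_distrib matrix_vector_mult_scaleR algebra_simps)
  have affine: "(\<lambda>(p, q). M *v (c - p) + N *v q) = (\<lambda>w. M *v c + L w)"
    by (auto simp: L_def matrix_vector_mult_diff_distrib)
  have "L (a, b) \<in> convex hull (L ` S)"
    using \<open>linear L\<close> box_point_mem_convex_hull_corners[OF assms(1,2)] unfolding S_def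
    by (rule in_convex_hull_linear_image)
  then have "M *v c + L (a, b) \<in> convex hull ((\<lambda>w. M *v c + L w) ` S)"
    using convex_hull_translation[of "M *v c" "L ` S"] by (simp add: image_image)
  then show ?thesis
    unfolding affine by (simp add: L_def matrix_vector_mult_diff_distrib algebra_simps)
qed

lemma convex_on_convex_hull_max_extreme_point:
  fixes S :: "'a::euclidean_space set"
  assumes S: "finite S" and z: "z \<in> convex hull S" and f: "convex_on UNIV f"
  shows "\<exists>y\<in>S. y extreme_point_of (convex hull S) \<and> f z \<le> f y"
proof -
  define E where "E = {x. x extreme_point_of (convex hull S)}"
  have hull_E: "convex hull S = convex hull E"
    unfolding E_def using S by (intro Krein_Milman_Minkowski compact_convex_hull finite_imp_compact) auto
  have "E \<subseteq> S"
    unfolding E_def using extreme_point_of_convex_hull by blast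
  then have "finite E"
    using S finite_subset by blast
  moreover have "E \<noteq> {}"
    using z hull_E by auto
  ultimately have "Max (f ` E) \<in> f ` E" "\<forall>x\<in>E. f x \<le> Max (f ` E)"
    by simp_all
  then obtain y where y: "y \<in> E" "\<forall>x\<in>E. f x \<le> f y"
    by (metis imageE)
  have "f z \<le> f y"
    using convex_on_convex_hull_bound[OF convex_on_subset[OF f subset_UNIV]] y(2) z hull_E by auto
  then show ?thesis
    using y(1) \<open>E \<subseteq> S\<close> by (auto simp: E_def)
qed

theorem theorem1:
  fixes ahat a alo ahi b blo bhi :: "real^('n::{finite,linorder})"
    and u y :: "real \<Rightarrow> real"
    and x th_y th_u :: "real \<Rightarrow> real^('n::{finite,linorder})"
    and Q :: "real^('n::{finite,linorder})^('n::{finite,linorder})"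
    and \<alpha> :: real
  defines "A0 \<equiv> obs_canon ahat"
  defines "Ey \<equiv> (\<lambda>t. matrix_inv (obsv_mat c0 A0) ** transpose (ctrb_mat (transpose A0) (th_y t)))"
  defines "Eu \<equiv> (\<lambda>t. matrix_inv (obsv_mat c0 A0) ** transpose (ctrb_mat (transpose A0) (th_u t)))"
  defines "xh \<equiv> (\<lambda>a' b' t. Ey t *v (ahat - a') + Eu t *v b')"
  defines "corners \<equiv> {(a', b'). \<forall>i. (a' $ i = alo $ i \<or> a' $ i = ahi $ i)
                                   \<and> (b' $ i = blo $ i \<or> b' $ i = bhi $ i)}"
  defines "eps0 \<equiv> x 0 - xh a b 0"
  assumes stable: "strictly_stable_canon ahat"
    and a_box: "\<forall>i. alo $ i \<le> a $ i \<and> a $ i \<le> ahi $ i"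
    and b_box: "\<forall>i. blo $ i \<le> b $ i \<and> b $ i \<le> bhi $ i"
    and x_ode: "\<forall>t\<ge>0. (x has_vector_derivative
                 (A0 *v x t + y t *\<^sub>R (ahat - a) + u t *\<^sub>R b)) (at t within {0..})"
    and y_out: "\<forall>t\<ge>0. y t = c0 \<bullet> x t"
    and th_y_ode: "\<forall>t\<ge>0. (th_y has_vector_derivative
                 (transpose A0 *v th_y t + y t *\<^sub>R c0)) (at t within {0..})"
    and th_u_ode: "\<forall>t\<ge>0. (th_u has_vector_derivative
                 (transpose A0 *v th_u t + u t *\<^sub>R c0)) (at t within {0..})"
    and Q_pd: "pos_def_mat Q"
    and lyap: "neg_semidef_mat (A0 ** Q + Q ** transpose A0 + (2 * \<alpha>) *\<^sub>R Q)"
  shows "\<forall>t\<ge>0. \<exists>a' b'. (a', b') \<in> corners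
           \<and> xh a' b' t extreme_point_of (convex hull ((\<lambda>(p, q). xh p q t) ` corners))
           \<and> qnorm Q (x t) \<le> qnorm Q (xh a' b' t) + exp (- \<alpha> * t) * qnorm Q eps0"
proof (intro allI impI)
  fix t :: real assume t: "0 \<le> t"
  have inv: "invertible (obsv_mat c0 A0)"
    by (simp add: A0_def invertible_obsv_mat_obs_canon)
  have xh_gain: "xh p q s = filter_gain c0 A0 (ahat - p) *v th_y s + filter_gain c0 A0 q *v th_u s"
    for p q s
    by (simp add: xh_def Ey_def Eu_def ctrb_estimate_eq_filter_gain)
  have error: "((\<lambda>s. x s - xh a b s) has_vector_derivative A0 *v (x s - xh a b s)) (at s within {0..})"
    if "0 \<le> s" for s
    unfolding xh_gain using that x_ode th_y_ode th_u_ode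
    by (intro state_minus_filter_estimate_has_vector_derivative[OF inv]) auto
  have decay: "qnorm Q (x t - xh a b t) \<le> exp (- \<alpha> * t) * qnorm Q eps0"
    using qnorm_exp_decay[OF Q_pd lyap error t] by (simp add: eps0_def)
  have "xh a b t \<in> convex hull ((\<lambda>(p, q). xh p q t) ` corners)"
    unfolding xh_def corners_def by (rule affine_box_point_mem_convex_hull_corners[OF a_box b_box])
  moreover have "finite ((\<lambda>(p, q). xh p q t) ` corners)"
    by (simp add: corners_def finite_box_corners)
  ultimately obtain z where z: "z \<in> (\<lambda>(p, q). xh p q t) ` corners"
      "z extreme_point_of (convex hull ((\<lambda>(p, q). xh p q t) ` corners))"
      "qnorm Q (xh a b t) \<le> qnorm Q z"
    using convex_on_convex_hull_max_extreme_point[OF _ _ convex_on_qnorm[OF Q_pd]] by blast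
  then obtain a' b' where "(a', b') \<in> corners" "z = xh a' b' t"
    by auto
  moreover have "qnorm Q (x t) \<le> qnorm Q (xh a b t) + qnorm Q (x t - xh a b t)"
    using qnorm_triangle[OF Q_pd, of "xh a b t" "x t - xh a b t"] by simp
  ultimately show "\<exists>a' b'. (a', b') \<in> corners
           \<and> xh a' b' t extreme_point_of (convex hull ((\<lambda>(p, q). xh p q t) ` corners))
           \<and> qnorm Q (x t) \<le> qnorm Q (xh a' b' t) + exp (- \<alpha> * t) * qnorm Q eps0"
    using decay z by fastforce
qed

end
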